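(* Let $\phi:\mathbb{R}_+\to\mathbb{R}_+$ be a non-negative continuous function and $d\nu(r)=\phi(r)\,dr$ the corresponding Borel measure on $\mathbb{R}_+$. Let $I,J,K,L$ be non-negative functions on $\mathbb{R}_+$ such that: (i) for all $a,b\ge0$, $I(ab)\le bJ(a)+K(aL(b))$; (ii) $J$ is a lower isoperimetric function for $\nu$; (iii) $K$ is non-decreasing and concave; (iv) $L$ is concave. Then for every non-negative continuously differentiable function $f$ on $\mathbb{R}_+$ with bounded support, $$I\Big(\int_{\mathbb{R}_+}f\,d\nu\Big)\le K\Big(\int_{\mathbb{R}_+}L(f)\,d\nu\Big)+\int_{\mathbb{R}_+}|f'|\,d\nu.$$
   Context: $\mathbb{R}_+=[0,\infty)$ with the metric $|x-y|$. For a Borel set $A\subset\mathbb{R}_+$, $\nu^+(A)=\liminf_{r\to0^+}\frac{\nu(A^r)-\nu(A)}{r}$, where $A^r=\{x\in\mathbb{R}_+:\operatorname{dist}(x,A)<r\}$. A function $J$ is a lower isoperimetric function for $\nu$ if $\nu^+(A)\ge J(\nu(A))$ for every Borel set $A\subset\mathbb{R}_+$. *)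

theory Defs
  imports "HOL-Analysis.Analysis" "HOL-Probability.Probability"
begin

definition nu_meas :: "(real \<Rightarrow> real) \<Rightarrow> real measure" where
  "nu_meas phi = density (restrict_space lborel {0..}) (\<lambda>x. ennreal (phi x))"

definition r_nbhd :: "real set \<Rightarrow> real \<Rightarrow> real set" where
  "r_nbhd A r = {x. 0 \<le> x \<and> (\<exists>a\<in>A. \<bar>x - a\<bar> < r)}"

definition nu_plus :: "real measure \<Rightarrow> real set \<Rightarrow> ennreal" where
  "nu_plus M A = Liminf (at_right (0::real))
      (\<lambda>r. (emeasure M (r_nbhd A r) - emeasure M A) / ennreal r)"

definition lower_isoperimetric :: "real measure \<Rightarrow> (real \<Rightarrow> real) \<Rightarrow> bool" where
  "lower_isoperimetric M J \<longleftrightarrow>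
     (\<forall>A \<in> sets borel. A \<subseteq> {0..} \<longrightarrow> emeasure M A < \<infinity> \<longrightarrow>
        ennreal (J (enn2real (emeasure M A))) \<le> nu_plus M A)"

text \<open>Extension of K to [0,inf]: K(inf) = sup of K over R_+ (limit, K non-decreasing).\<close>
definition K_ext :: "(real \<Rightarrow> real) \<Rightarrow> ennreal \<Rightarrow> ereal" where
  "K_ext K x = (if x = \<infinity> then (SUP t\<in>{0::real..}. ereal (K t)) else ereal (K (enn2real x)))"

end

theory Submission
  imports Defs
begin

text \<open>Put \<open>u(s) = \<nu>{f > s}\<close>, so that \<open>m = \<integral>f d\<nu> = \<integral>\<^sub>0\<^sup>\<infinity> u(s) ds\<close> by the layer-cake formula.
  Since the \<open>r\<close>-neighbourhood of \<open>{f > s}\<close> lies in \<open>{f + r(|f'| + \<epsilon>) > s}\<close>, Fatou's lemma gives the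
  co-area inequality \<open>\<integral>\<^sub>0\<^sup>\<infinity> \<nu>\<^sup>+{f > s} ds \<le> \<integral>|f'| d\<nu>\<close>.  Writing \<open>m = u(s) \<cdot> m/u(s)\<close> in (i) and using (ii)
  gives \<open>u(s)/m \<cdot> I(m) \<le> \<nu>\<^sup>+{f > s} + u(s)/m \<cdot> K(u(s) L(m/u(s)))\<close>; integrate over \<open>s\<close>.  The last term is
  at most \<open>K(\<integral>L(f) d\<nu>)\<close> by Jensen's inequality for the probability density \<open>u/m\<close>, because integrating a
  supporting line of the concave \<open>L\<close> over \<open>0 \<le> s < f(y)\<close> shows \<open>\<integral> u/m \<cdot> u L(m/u) ds \<le> \<integral>L(f) d\<nu>\<close>.\<close>

section \<open>Concave functions on the half-line\<close>

lemma concave_on_slope_le: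
  fixes K :: "real \<Rightarrow> real"
  assumes K: "concave_on S K" and S: "y \<in> S" "z \<in> S" and yvz: "y < v" "v < z"
  shows "(K z - K v) / (z - v) \<le> (K v - K y) / (v - y)"
proof -
  have "convex_on S (\<lambda>t. - K t)" using K by (simp add: concave_on_def)
  from convex_on_slope_le[OF this S yvz]
  have "(K v - K y) / (y - v) \<le> (K z - K v) / (v - z)"
    by (simp add: algebra_simps)
  moreover have "a / (p - q) = - (a / (q - p))" for a p q :: real
    by (metis minus_diff_eq minus_divide_right)
  ultimately show ?thesis by (metis neg_le_iff_le)
qed

lemma concave_on_nonneg_imp_mono_on:
  fixes L :: "real \<Rightarrow> real"
  assumes L: "concave_on {0..} L" and nonneg: "\<And>x. 0 \<le> x \<Longrightarrow> 0 \<le> L x"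
  shows "mono_on {0..} L"
proof (rule mono_onI)
  fix a b :: real assume a: "a \<in> {0..}" and b: "b \<in> {0..}" and "a \<le> b"
  show "L a \<le> L b"
  proof (rule ccontr)
    assume decr: "\<not> L a \<le> L b"
    then have ab: "a < b" using \<open>a \<le> b\<close> by (cases "a = b") auto
    define m where "m = (L a - L b) / (b - a)"
    have m: "m > 0" using decr ab by (simp add: m_def)
    \<comment> \<open>the chord slope \<open>-m\<close> bounds all later slopes, so \<open>L\<close> would become negative\<close>
    define z where "z = b + (L b + 1) / m"
    have zb: "z > b" using m nonneg[of b] b by (simp add: z_def)
    have "(L z - L b) / (z - b) \<le> (L b - L a) / (b - a)"
      using zb a b by (intro concave_on_slope_le[OF L _ _ ab]) auto
    also have "\<dots> = - m" by (simp add: m_def minus_divide_left)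
    finally have "L z - L b \<le> - m * (z - b)" using zb by (simp add: divide_le_eq)
    also have "\<dots> = - (L b + 1)" using m by (simp add: z_def)
    finally have "L z < 0" by simp
    with nonneg[of z] zb b show False by simp
  qed
qed

lemma mono_concave_on_supporting_line:
  fixes K :: "real \<Rightarrow> real"
  assumes K: "concave_on {0..} K" and mono: "mono_on {0..} K" and v: "v > 0"
  obtains d where "d \<ge> 0" "\<And>y. 0 \<le> y \<Longrightarrow> K y \<le> K v + d * (y - v)"
proof -
  define S where "S = (\<lambda>y. (K v - K y) / (v - y)) ` {0..<v}"
  have ne: "S \<noteq> {}" using v by (auto simp: S_def)
  have right: "(K z - K v) / (z - v) \<le> s" if "s \<in> S" "z > v" for s z
    using that v by (auto simp: S_def intro!: concave_on_slope_le[OF K])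
  have bdd: "bdd_below S" using right[of _ "v + 1"] by (auto simp: bdd_below_def)
  define d where "d = Inf S"
  have "d \<ge> 0" unfolding d_def
    using mono v by (intro cInf_greatest[OF ne]) (auto simp: S_def mono_on_def)
  moreover have "K y \<le> K v + d * (y - v)" if "y \<ge> 0" for y
  proof (cases y v rule: linorder_cases)
    case less
    have "d \<le> (K v - K y) / (v - y)" unfolding d_def
      by (rule cInf_lower[OF _ bdd]) (use less that in \<open>auto simp: S_def\<close>)
    with less show ?thesis by (simp add: le_divide_eq algebra_simps)
  next
    case greater
    have "(K y - K v) / (y - v) \<le> d" unfolding d_def
      by (rule cInf_greatest[OF ne]) (rule right[OF _ greater])
    with greater show ?thesis by (simp add: divide_le_eq algebra_simps)
  qed simp
  ultimately show ?thesis using that by blast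
qed

lemma perspective_le_supporting_line:
  fixes L :: "real \<Rightarrow> real"
  assumes m: "0 < m" and u: "0 \<le> u" and d: "0 \<le> d" "\<And>y. 0 \<le> y \<Longrightarrow> L y \<le> L v + d * (y - v)"
  shows "u * L (m / u) / m \<le> (L v - d * v) / m * u + d"
proof (cases "u = 0")
  case False
  then have u: "0 < u" using u by simp
  have "u * L (m / u) \<le> u * (L v + d * (m / u - v))"
    using d(2)[of "m / u"] m u by (intro mult_left_mono) auto
  also have "\<dots> = u * (L v - d * v) + d * m"
    using u by (simp add: field_simps)
  finally show ?thesis using m by (simp add: field_simps)
qed (use d in simp)

lemma measurable_concave_on_comp:
  fixes L :: "real \<Rightarrow> real"
  assumes L: "concave_on {0..} L" and h: "h \<in> borel_measurable M"
    and nonneg: "\<And>x. x \<in> space M \<Longrightarrow> 0 \<le> h x"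
  shows "(\<lambda>x. L (h x)) \<in> borel_measurable M"
proof -
  have "convex_on {0<..} (\<lambda>x. - L x)"
    using L unfolding concave_on_def by (rule convex_on_subset) auto
  then have "continuous_on {0<..} (\<lambda>x. - L x)" by (intro convex_on_continuous) auto
  then have "continuous_on {0<..} L" using continuous_on_minus by fastforce
  \<comment> \<open>\<open>L\<close> may jump at the endpoint \<open>0\<close>, so it is only continuous on \<open>{0<..}\<close>\<close>
  then have "(\<lambda>y. if y \<in> {0<..} then L y else L 0) \<in> borel_measurable borel"
    by (intro borel_measurable_continuous_on_if) auto
  then have "(\<lambda>x. if h x \<in> {0<..} then L (h x) else L 0) \<in> borel_measurable M"
    using h by measurable
  moreover have "\<And>x. x \<in> space M \<Longrightarrow> (if h x \<in> {0<..} then L (h x) else L 0) = L (h x)"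
    using nonneg by force
  ultimately show ?thesis by (simp cong: measurable_cong)
qed

section \<open>Measure-theoretic tools\<close>

lemma Liminf_le_liminf_filterlim:
  fixes g :: "'a \<Rightarrow> 'b::complete_linorder"
  assumes "filterlim r F sequentially"
  shows "Liminf F g \<le> liminf (\<lambda>n. g (r n))"
proof -
  have "Liminf F g \<le> Liminf (filtermap r sequentially) g"
    unfolding Liminf_def
    by (rule SUP_subset_mono) (use assms in \<open>auto simp: le_filter_def filterlim_def\<close>)
  also have "\<dots> \<le> liminf (\<lambda>n. g (r n))" by (rule Liminf_filtermap_le)
  finally show ?thesis .
qed

lemma borel_measurable_antimono_ennreal:
  fixes g :: "real \<Rightarrow> ennreal"
  assumes antimono: "\<And>s t. s \<le> t \<Longrightarrow> g t \<le> g s" and finite: "\<And>s. g s < \<infinity>"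
  shows "g \<in> borel_measurable borel"
proof -
  have "mono (\<lambda>s. - enn2real (g s))"
    using finite by (auto simp: mono_def intro!: enn2real_mono antimono)
  then have "(\<lambda>s. - enn2real (g s)) \<in> borel_measurable borel" by (rule borel_measurable_mono)
  then have "(\<lambda>s. enn2real (g s)) \<in> borel_measurable borel" by simp
  from measurable_compose[OF this measurable_ennreal]
  have "(\<lambda>s. ennreal (enn2real (g s))) \<in> borel_measurable borel" .
  moreover have "(\<lambda>s. ennreal (enn2real (g s))) = g"
    using finite by (auto simp: fun_eq_iff less_top)
  ultimately show ?thesis by simp
qed

lemma (in sigma_finite_measure) borel_measurable_emeasure_superlevel:
  fixes g :: "'a \<Rightarrow> real"
  assumes [measurable]: "g \<in> borel_measurable M"
  shows "(\<lambda>s. emeasure M {x \<in> space M. s < g x}) \<in> borel_measurable borel"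
proof -
  have "{p \<in> space (lborel \<Otimes>\<^sub>M M). fst p < g (snd p)} \<in> sets (lborel \<Otimes>\<^sub>M M)"
    by measurable
  then have "(\<lambda>s. emeasure M (Pair s -` {p \<in> space (lborel \<Otimes>\<^sub>M M). fst p < g (snd p)})) \<in> borel_measurable lborel"
    by (rule measurable_emeasure_Pair)
  moreover have "Pair s -` {p \<in> space (lborel \<Otimes>\<^sub>M M). fst p < g (snd p)} = {x \<in> space M. s < g x}" for s
    by (auto simp: space_pair_measure)
  ultimately show ?thesis by simp
qed

lemma (in sigma_finite_measure) nn_integral_weighted_layer_cake:
  fixes g :: "'a \<Rightarrow> real" and q :: "real \<Rightarrow> ennreal"
  assumes [measurable]: "g \<in> borel_measurable M" "q \<in> borel_measurable borel"
  shows "(\<integral>\<^sup>+ x. (\<integral>\<^sup>+ s\<in>{0..<g x}. q s \<partial>lborel) \<partial>M)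
       = (\<integral>\<^sup>+ s\<in>{0..}. q s * emeasure M {x \<in> space M. s < g x} \<partial>lborel)"
proof -
  interpret pair_sigma_finite M lborel by unfold_locales
  define F :: "'a \<Rightarrow> real \<Rightarrow> ennreal"
    where "F x s = q s * indicator {p. 0 \<le> snd p \<and> snd p < g (fst p)} (x, s)" for x s
  have "{p \<in> space (M \<Otimes>\<^sub>M lborel). 0 \<le> snd p \<and> snd p < g (fst p)} \<in> sets (M \<Otimes>\<^sub>M lborel)"
    by measurable
  then have "(\<lambda>p. indicator {p. 0 \<le> snd p \<and> snd p < g (fst p)} p :: ennreal) \<in> borel_measurable (M \<Otimes>\<^sub>M lborel)"
    by (simp add: borel_measurable_indicator' Int_def conj_commute)
  then have F: "(\<lambda>(x, s). F x s) \<in> borel_measurable (M \<Otimes>\<^sub>M lborel)"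
    unfolding F_def by (simp add: case_prod_beta')
  have "(\<integral>\<^sup>+ x. (\<integral>\<^sup>+ s\<in>{0..<g x}. q s \<partial>lborel) \<partial>M) = (\<integral>\<^sup>+ x. (\<integral>\<^sup>+ s. F x s \<partial>lborel) \<partial>M)"
    by (intro nn_integral_cong) (auto simp: F_def indicator_def)
  also have "\<dots> = (\<integral>\<^sup>+ s. (\<integral>\<^sup>+ x. F x s \<partial>M) \<partial>lborel)"
    by (rule Fubini'[OF F, symmetric])
  also have "\<dots> = (\<integral>\<^sup>+ s\<in>{0..}. q s * emeasure M {x \<in> space M. s < g x} \<partial>lborel)"
  proof (rule nn_integral_cong)
    fix s :: real
    have "{x \<in> space M. s < g x} \<in> sets M" by measurable
    moreover have "(\<integral>\<^sup>+ x. F x s \<partial>M) = (\<integral>\<^sup>+ x. q s * indicator {0..} s * indicator {x \<in> space M. s < g x} x \<partial>M)"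
      by (intro nn_integral_cong) (auto simp: F_def indicator_def)
    ultimately show "(\<integral>\<^sup>+ x. F x s \<partial>M) = q s * emeasure M {x \<in> space M. s < g x} * indicator {0..} s"
      by (simp add: nn_integral_cmult ac_simps)
  qed
  finally show ?thesis .
qed

lemma (in sigma_finite_measure) nn_integral_layer_cake:
  fixes g :: "'a \<Rightarrow> real"
  assumes [measurable]: "g \<in> borel_measurable M" and nonneg: "\<And>x. x \<in> space M \<Longrightarrow> 0 \<le> g x"
  shows "(\<integral>\<^sup>+ x. ennreal (g x) \<partial>M) = (\<integral>\<^sup>+ s\<in>{0..}. emeasure M {x \<in> space M. s < g x} \<partial>lborel)"
proof -
  have "(\<integral>\<^sup>+ x. ennreal (g x) \<partial>M) = (\<integral>\<^sup>+ x. (\<integral>\<^sup>+ s\<in>{0..<g x}. 1 \<partial>lborel) \<partial>M)"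
    using nonneg by (intro nn_integral_cong) simp
  also have "\<dots> = (\<integral>\<^sup>+ s\<in>{0..}. 1 * emeasure M {x \<in> space M. s < g x} \<partial>lborel)"
    by (rule nn_integral_weighted_layer_cake) simp_all
  finally show ?thesis by simp
qed

lemma (in sigma_finite_measure) nn_integral_superlevel_diff:
  fixes f g :: "'a \<Rightarrow> real"
  assumes [measurable]: "f \<in> borel_measurable M" "g \<in> borel_measurable M"
    and nonneg: "\<And>x. x \<in> space M \<Longrightarrow> 0 \<le> f x" and le: "\<And>x. x \<in> space M \<Longrightarrow> f x \<le> g x"
    and finite: "(\<integral>\<^sup>+ x. ennreal (f x) \<partial>M) \<noteq> \<infinity>"
  shows "(\<integral>\<^sup>+ s\<in>{0..}. emeasure M {x \<in> space M. s < g x} - emeasure M {x \<in> space M. s < f x} \<partial>lborel)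
       = (\<integral>\<^sup>+ x. ennreal (g x) \<partial>M) - (\<integral>\<^sup>+ x. ennreal (f x) \<partial>M)"
proof -
  define F where "F s = emeasure M {x \<in> space M. s < f x} * indicator {0..} s" for s :: real
  define G where "G s = emeasure M {x \<in> space M. s < g x} * indicator {0..} s" for s :: real
  have [measurable]: "F \<in> borel_measurable lborel" "G \<in> borel_measurable lborel"
    unfolding F_def G_def
    using borel_measurable_emeasure_superlevel[of f] borel_measurable_emeasure_superlevel[of g]
    by measurable
  have g_nonneg: "\<And>x. x \<in> space M \<Longrightarrow> 0 \<le> g x" using nonneg le by (meson order_trans)
  have "F s \<le> G s" for s
    unfolding F_def G_def using le
    by (intro mult_right_mono emeasure_mono) (auto intro: less_le_trans)
  moreover have "(\<integral>\<^sup>+ s. F s \<partial>lborel) \<noteq> \<infinity>"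
    using finite by (simp add: F_def nn_integral_layer_cake[OF _ nonneg])
  ultimately have "(\<integral>\<^sup>+ s. G s - F s \<partial>lborel) = (\<integral>\<^sup>+ s. G s \<partial>lborel) - (\<integral>\<^sup>+ s. F s \<partial>lborel)"
    by (intro nn_integral_diff) auto
  moreover have "G s - F s = (emeasure M {x \<in> space M. s < g x} - emeasure M {x \<in> space M. s < f x}) * indicator {0..} s" for s
    by (simp add: F_def G_def indicator_def)
  ultimately show ?thesis
    by (simp add: F_def G_def nn_integral_layer_cake[OF _ nonneg] nn_integral_layer_cake[OF _ g_nonneg])
qed

lemma K_ext_ge_K:
  assumes "mono_on {0..} K" "0 \<le> t" "ennreal t \<le> S"
  shows "ereal (K t) \<le> K_ext K S"
proof (cases "S = \<infinity>")
  case True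
  have "ereal (K t) \<le> (SUP t\<in>{0..}. ereal (K t))" by (rule SUP_upper) (simp add: assms(2))
  with True show ?thesis by (simp add: K_ext_def)
next
  case False
  then have "t \<le> enn2real S" using assms(3) by (cases S) auto
  then show ?thesis using False assms(1,2) by (simp add: K_ext_def mono_onD)
qed

text \<open>Jensen's inequality for the probability density \<open>w\<close>, proved through a supporting line of \<open>K\<close>
  at \<open>S\<close>; the cases \<open>S = 0\<close> (where \<open>K\<close> may jump) and \<open>S = \<infinity>\<close> are treated separately.\<close>

context
  fixes K :: "real \<Rightarrow> real" and w G :: "'a \<Rightarrow> real" and M :: "'a measure"
  assumes K_mono: "mono_on {0..} K" and K_concave: "concave_on {0..} K"
    and K_nonneg: "\<And>y. 0 \<le> y \<Longrightarrow> 0 \<le> K y"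
    and w_measurable[measurable]: "w \<in> borel_measurable M"
    and G_measurable[measurable]: "G \<in> borel_measurable M"
    and w_nonneg: "\<And>s. s \<in> space M \<Longrightarrow> 0 \<le> w s"
    and G_nonneg: "\<And>s. s \<in> space M \<Longrightarrow> 0 \<le> G s"
    and w_total: "(\<integral>\<^sup>+ s. ennreal (w s) \<partial>M) = 1"
begin

private lemma KG_measurable: "(\<lambda>s. K (G s)) \<in> borel_measurable M"
  using measurable_concave_on_comp[OF K_concave G_measurable] G_nonneg by blast

private lemma nn_integral_w_const:
  assumes "0 \<le> c" shows "(\<integral>\<^sup>+ s. ennreal (w s * c) \<partial>M) = ennreal c"
proof -
  have "(\<integral>\<^sup>+ s. ennreal (w s * c) \<partial>M) = (\<integral>\<^sup>+ s. ennreal (w s) * ennreal c \<partial>M)"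
    using assms w_nonneg by (intro nn_integral_cong) (simp add: ennreal_mult)
  also have "\<dots> = ennreal c" by (simp add: nn_integral_multc w_total)
  finally show ?thesis .
qed

private lemma nn_integral_w_concave_le_pos:
  assumes wG: "(\<integral>\<^sup>+ s. ennreal (w s * G s) \<partial>M) \<le> ennreal \<sigma>" and \<sigma>: "\<sigma> > 0"
  shows "(\<integral>\<^sup>+ s. ennreal (w s * K (G s)) \<partial>M) \<le> ennreal (K \<sigma>)"
proof -
  note KG_measurable[measurable]
  obtain d where d: "d \<ge> 0" "\<And>y. 0 \<le> y \<Longrightarrow> K y \<le> K \<sigma> + d * (y - \<sigma>)"
    using mono_concave_on_supporting_line[OF K_concave K_mono \<sigma>] by blast
  have Ks: "K \<sigma> \<ge> 0" using K_nonneg \<sigma> by simp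
  have pointwise: "ennreal (w s * K (G s)) + ennreal (w s * (d * \<sigma>))
      \<le> ennreal (w s * K \<sigma>) + ennreal d * ennreal (w s * G s)" if s: "s \<in> space M" for s
  proof -
    have "w s * (K (G s) + d * \<sigma>) \<le> w s * (K \<sigma> + d * G s)"
      using d(2)[OF G_nonneg[OF s]] w_nonneg[OF s] by (intro mult_left_mono) (simp_all add: algebra_simps)
    then show ?thesis
      using w_nonneg[OF s] G_nonneg[OF s] K_nonneg[OF G_nonneg[OF s]] Ks d \<sigma>
      by (simp add: ennreal_mult[symmetric] ennreal_plus[symmetric] algebra_simps del: ennreal_plus)
  qed
  have "(\<integral>\<^sup>+ s. ennreal (w s * K (G s)) \<partial>M) + ennreal (d * \<sigma>)
      = (\<integral>\<^sup>+ s. ennreal (w s * K (G s)) + ennreal (w s * (d * \<sigma>)) \<partial>M)"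
    using d \<sigma> by (simp add: nn_integral_add nn_integral_w_const)
  also have "\<dots> \<le> (\<integral>\<^sup>+ s. ennreal (w s * K \<sigma>) + ennreal d * ennreal (w s * G s) \<partial>M)"
    by (intro nn_integral_mono pointwise)
  also have "\<dots> = ennreal (K \<sigma>) + ennreal d * (\<integral>\<^sup>+ s. ennreal (w s * G s) \<partial>M)"
    using Ks by (simp add: nn_integral_add nn_integral_cmult nn_integral_w_const)
  also have "\<dots> \<le> ennreal (K \<sigma>) + ennreal (d * \<sigma>)"
    using wG d \<sigma> by (simp add: ennreal_mult add_left_mono mult_left_mono)
  finally show ?thesis by (simp add: ennreal_add_left_cancel_le add.commute)
qed

private lemma nn_integral_w_concave_zero:
  assumes wG: "(\<integral>\<^sup>+ s. ennreal (w s * G s) \<partial>M) = 0"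
  shows "(\<integral>\<^sup>+ s. ennreal (w s * K (G s)) \<partial>M) = ennreal (K 0)"
proof -
  have "AE s in M. ennreal (w s * G s) = 0" using wG by (simp add: nn_integral_0_iff_AE)
  then have "AE s in M. ennreal (w s * K (G s)) = ennreal (w s * K 0)"
    using AE_space
  proof eventually_elim
    case (elim s)
    then have "w s * G s = 0" by (metis antisym ennreal_eq_0_iff w_nonneg G_nonneg mult_nonneg_nonneg)
    then show ?case by auto
  qed
  then have "(\<integral>\<^sup>+ s. ennreal (w s * K (G s)) \<partial>M) = (\<integral>\<^sup>+ s. ennreal (w s * K 0) \<partial>M)"
    by (rule nn_integral_cong_AE)
  also have "\<dots> = ennreal (K 0)" using K_nonneg by (simp add: nn_integral_w_const)
  finally show ?thesis .
qed

lemma nn_integral_concave_le_K_ext: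
  assumes wG: "(\<integral>\<^sup>+ s. ennreal (w s * G s) \<partial>M) \<le> S"
  shows "enn2ereal (\<integral>\<^sup>+ s. ennreal (w s * K (G s)) \<partial>M) \<le> K_ext K S"
proof (cases S)
  case (real \<sigma>)
  then show ?thesis
  proof (cases "\<sigma> > 0")
    case True
    then have "(\<integral>\<^sup>+ s. ennreal (w s * K (G s)) \<partial>M) \<le> ennreal (K \<sigma>)"
      using wG real by (intro nn_integral_w_concave_le_pos) auto
    then show ?thesis
      using real True K_nonneg[of \<sigma>] by (simp add: K_ext_def less_eq_ennreal.rep_eq)
  next
    case False
    then have "S = 0" using real by (simp add: ennreal_eq_0_iff)
    then show ?thesis using wG K_nonneg[of 0] by (simp add: nn_integral_w_concave_zero K_ext_def)
  qed
next
  case top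
  show ?thesis
  proof (cases "(SUP t\<in>{0::real..}. ereal (K t))")
    case (real k)
    then have Kk: "K t \<le> k" if "0 \<le> t" for t
      by (metis SUP_upper atLeast_iff ereal_less_eq(3) that)
    have k: "0 \<le> k" using Kk[of 0] K_nonneg[of 0] by simp
    have "(\<integral>\<^sup>+ s. ennreal (w s * K (G s)) \<partial>M) \<le> (\<integral>\<^sup>+ s. ennreal (w s * k) \<partial>M)"
      using w_nonneg G_nonneg Kk by (intro nn_integral_mono ennreal_leI mult_left_mono) auto
    also have "\<dots> = ennreal k" using k by (rule nn_integral_w_const)
    finally show ?thesis using top real k by (simp add: K_ext_def less_eq_ennreal.rep_eq)
  qed (use top SUP_upper[of 0 "{0..}" "\<lambda>t. ereal (K t)"] in \<open>auto simp: K_ext_def\<close>)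
qed

end

section \<open>The measure \<open>nu_meas phi\<close>\<close>

lemma space_nu_meas[simp]: "space (nu_meas phi) = {0..}"
  by (simp add: nu_meas_def space_restrict_space)

lemma sets_nu_meas: "sets (nu_meas phi) = sets (restrict_space borel {0..})"
  by (simp add: nu_meas_def sets_restrict_space_cong[OF sets_lborel])

lemma sets_nu_meas_iff: "A \<in> sets (nu_meas phi) \<longleftrightarrow> A \<in> sets borel \<and> A \<subseteq> {0..}"
  unfolding sets_nu_meas by (subst sets_restrict_space_iff) auto

lemma borel_measurable_nu_meas_iff:
  "g \<in> borel_measurable (nu_meas phi) \<longleftrightarrow> g \<in> borel_measurable (restrict_space borel {0..})"
  using measurable_cong_sets[OF sets_nu_meas refl] by blast

lemma borel_measurable_nu_meas_continuous_on:
  "continuous_on {0..} g \<Longrightarrow> g \<in> borel_measurable (nu_meas phi)"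
  unfolding borel_measurable_nu_meas_iff by (rule borel_measurable_continuous_on_restrict)

context
  fixes phi :: "real \<Rightarrow> real"
  assumes phi_cont: "continuous_on {0..} phi"
begin

lemma borel_measurable_density_phi:
  "(\<lambda>x. ennreal (phi x)) \<in> borel_measurable (restrict_space lborel {0..})"
proof -
  have "phi \<in> borel_measurable (restrict_space borel {0..})"
    by (rule borel_measurable_continuous_on_restrict[OF phi_cont])
  then have "phi \<in> borel_measurable (restrict_space lborel {0..})"
    using measurable_cong_sets[OF sets_restrict_space_cong[OF sets_lborel] refl] by simp
  then show ?thesis by measurable
qed

lemma sigma_finite_nu_meas: "sigma_finite_measure (nu_meas phi)"
proof -
  interpret S: sigma_finite_measure "restrict_space lborel {0::real..}"
    by (rule sigma_finite_measure_restrict_space)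
      (auto simp: lborel.sigma_finite_measure_axioms intro!: borel_closed closed_atLeast)
  show ?thesis unfolding nu_meas_def
    by (subst S.sigma_finite_iff_density_finite[OF borel_measurable_density_phi]) auto
qed

lemma emeasure_nu_meas_bounded_finite:
  assumes "A \<subseteq> {0..b}"
  shows "emeasure (nu_meas phi) A < \<infinity>"
proof -
  obtain C where C: "\<And>x. x \<in> {0..b} \<Longrightarrow> phi x \<le> C"
    using compact_imp_bounded[OF compact_continuous_image[OF continuous_on_subset[OF phi_cont] compact_Icc, of 0 b]]
    unfolding bounded_iff by (metis abs_le_D1 atLeast_iff atLeastAtMost_iff image_eqI real_norm_def subsetI)
  have "emeasure (nu_meas phi) A \<le> emeasure (nu_meas phi) {0..b}"
    by (rule emeasure_mono) (use assms in \<open>auto simp: sets_nu_meas_iff\<close>)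
  also have "\<dots> = (\<integral>\<^sup>+ x. ennreal (phi x) * indicator {0..b} x \<partial>restrict_space lborel {0..})"
    unfolding nu_meas_def
    by (rule emeasure_density[OF borel_measurable_density_phi])
      (simp add: sets_restrict_space_iff)
  also have "\<dots> = (\<integral>\<^sup>+ x. ennreal (phi x) * indicator {0..b} x * indicator {0..} x \<partial>lborel)"
    by (rule nn_integral_restrict_space) auto
  also have "\<dots> \<le> (\<integral>\<^sup>+ x. ennreal C * indicator {0..b} x \<partial>lborel)"
    by (intro nn_integral_mono) (auto simp: indicator_def intro!: ennreal_leI C)
  also have "\<dots> < \<infinity>"
    by (cases "0 \<le> b") (simp_all add: nn_integral_cmult_indicator ennreal_mult_less_top)
  finally show ?thesis .
qed

lemma nn_integral_nu_meas_finite: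
  assumes g: "continuous_on {0..} g" and vanish: "\<And>x. b < x \<Longrightarrow> g x = 0"
  shows "(\<integral>\<^sup>+ x. ennreal \<bar>g x\<bar> \<partial>nu_meas phi) < \<infinity>"
proof -
  obtain C where C: "\<And>x. x \<in> {0..b} \<Longrightarrow> \<bar>g x\<bar> \<le> C"
    using compact_imp_bounded[OF compact_continuous_image[OF continuous_on_subset[OF g] compact_Icc, of 0 b]]
    unfolding bounded_iff by (metis atLeast_iff atLeastAtMost_iff image_eqI real_norm_def subsetI)
  have "(\<integral>\<^sup>+ x. ennreal \<bar>g x\<bar> \<partial>nu_meas phi) \<le> (\<integral>\<^sup>+ x. ennreal C * indicator {0..b} x \<partial>nu_meas phi)"
    using C vanish by (intro nn_integral_mono) (force simp: indicator_def intro!: ennreal_leI)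
  also have "\<dots> = ennreal C * emeasure (nu_meas phi) {0..b}"
    by (rule nn_integral_cmult_indicator) (simp add: sets_nu_meas_iff)
  also have "\<dots> < \<infinity>"
    using emeasure_nu_meas_bounded_finite[of "{0..b}" b] by (simp add: ennreal_mult_less_top)
  finally show ?thesis .
qed

end

section \<open>Functions of bounded support\<close>

locale bounded_support_C1 =
  fixes phi f f' :: "real \<Rightarrow> real" and R :: real
  assumes phi_cont: "continuous_on {0..} phi"
    and f_nonneg: "\<And>x. 0 \<le> x \<Longrightarrow> 0 \<le> f x"
    and f_deriv: "\<And>x. 0 \<le> x \<Longrightarrow> (f has_real_derivative f' x) (at x within {0..})"
    and f'_cont: "continuous_on {0..} f'"
    and R_pos: "0 < R" and f_vanish: "\<And>x. R \<le> x \<Longrightarrow> f x = 0"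
begin

abbreviation nu :: "real measure" where "nu \<equiv> nu_meas phi"

abbreviation superlevel :: "real \<Rightarrow> real set" where "superlevel s \<equiv> {y \<in> {0..}. s < f y}"

sublocale nu: sigma_finite_measure nu
  by (rule sigma_finite_nu_meas[OF phi_cont])

lemma f_cont: "continuous_on {0..} f"
  unfolding continuous_on_eq_continuous_within using f_deriv DERIV_continuous by blast

lemma f'_vanish:
  assumes "R < x" shows "f' x = 0"
proof -
  have "x \<in> interior {0::real..}" using R_pos assms by simp
  then have "(f has_real_derivative f' x) (at x)"
    using f_deriv[of x] R_pos assms at_within_interior by fastforce
  then have "((\<lambda>_. 0) has_real_derivative f' x) (at x)"
    by (rule has_field_derivative_transform_within_open[of _ _ _ "{R<..}"]) (use f_vanish assms in auto)
  then show ?thesis using DERIV_unique DERIV_const by blast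
qed

lemma f_measurable[measurable]: "f \<in> borel_measurable nu"
  by (rule borel_measurable_nu_meas_continuous_on[OF f_cont])

lemma f'_measurable[measurable]: "f' \<in> borel_measurable nu"
  by (rule borel_measurable_nu_meas_continuous_on[OF f'_cont])

lemma superlevel_in_sets: "superlevel s \<in> sets nu"
proof -
  have "{y \<in> space nu. s < f y} \<in> sets nu" by measurable
  then show ?thesis by simp
qed

lemma superlevel_subset: "0 \<le> s \<Longrightarrow> superlevel s \<subseteq> {0..R}"
proof
  fix y assume "0 \<le> s" "y \<in> superlevel s"
  then have "f y \<noteq> 0" by auto
  with \<open>y \<in> superlevel s\<close> show "y \<in> {0..R}" using f_vanish[of y] by force
qed

lemma r_nbhd_in_sets: "r_nbhd A r \<in> sets nu"
proof -
  have "r_nbhd A r = {0..} \<inter> (\<Union>a\<in>A. ball a r)"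
    by (auto simp: r_nbhd_def dist_real_def abs_minus_commute)
  also have "\<dots> \<in> sets borel" by (intro sets.Int borel_closed borel_open) auto
  finally show ?thesis by (auto simp: sets_nu_meas_iff r_nbhd_def)
qed

lemma r_nbhd_superlevel_subset: "0 \<le> s \<Longrightarrow> r \<le> 1 \<Longrightarrow> r_nbhd (superlevel s) r \<subseteq> {0..R + 1}"
proof
  fix x assume s: "0 \<le> s" "r \<le> 1" and "x \<in> r_nbhd (superlevel s) r"
  then obtain a where a: "a \<in> superlevel s" "\<bar>x - a\<bar> < r" "0 \<le> x" by (auto simp: r_nbhd_def)
  then have "a \<le> R" using superlevel_subset[OF s(1)] by auto
  with a s show "x \<in> {0..R + 1}" by auto
qed

lemma emeasure_superlevel_finite: "0 \<le> s \<Longrightarrow> emeasure nu (superlevel s) < \<infinity>"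
  by (rule emeasure_nu_meas_bounded_finite[OF phi_cont superlevel_subset])

lemma nn_integral_f_finite: "(\<integral>\<^sup>+ y. ennreal (f y) \<partial>nu) < \<infinity>"
proof -
  have "(\<integral>\<^sup>+ y. ennreal \<bar>f y\<bar> \<partial>nu) < \<infinity>"
    by (rule nn_integral_nu_meas_finite[OF phi_cont f_cont, of R]) (simp add: f_vanish)
  moreover have "(\<integral>\<^sup>+ y. ennreal \<bar>f y\<bar> \<partial>nu) = (\<integral>\<^sup>+ y. ennreal (f y) \<partial>nu)"
    by (intro nn_integral_cong) (simp add: f_nonneg)
  ultimately show ?thesis by simp
qed

lemma nn_integral_abs_f'_finite: "(\<integral>\<^sup>+ y. ennreal \<bar>f' y\<bar> \<partial>nu) < \<infinity>"
  by (rule nn_integral_nu_meas_finite[OF phi_cont f'_cont]) (rule f'_vanish)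

lemma f_first_order_bound:
  assumes e: "e > 0"
  obtains \<delta> where "0 < \<delta>" "\<delta> \<le> 1"
    "\<And>x a. 0 \<le> x \<Longrightarrow> 0 \<le> a \<Longrightarrow> \<bar>a - x\<bar> < \<delta> \<Longrightarrow> f a \<le> f x + \<bar>a - x\<bar> * (\<bar>f' x\<bar> + e)"
proof -
  have "uniformly_continuous_on {0..R + 2} f'"
    by (rule compact_uniformly_continuous) (auto intro: continuous_on_subset[OF f'_cont])
  then obtain d where d: "d > 0"
    "\<And>x x'. x \<in> {0..R + 2} \<Longrightarrow> x' \<in> {0..R + 2} \<Longrightarrow> dist x' x < d \<Longrightarrow> dist (f' x') (f' x) < e"
    unfolding uniformly_continuous_on_def using e by metis
  define \<delta> where "\<delta> = min d 1"
  have "f a \<le> f x + \<bar>a - x\<bar> * (\<bar>f' x\<bar> + e)" if xa: "0 \<le> x" "0 \<le> a" "\<bar>a - x\<bar> < \<delta>" for x a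
  proof (cases "x > R + 1")
    case True
    then have "f a = 0" using xa f_vanish by (auto simp: \<delta>_def)
    moreover have "0 \<le> f x + \<bar>a - x\<bar> * (\<bar>f' x\<bar> + e)" using f_nonneg xa e by simp
    ultimately show ?thesis by simp
  next
    case False
    define S where "S = {min x a..max x a}"
    have S: "S \<subseteq> {0..}" using xa by (auto simp: S_def)
    have "(f has_field_derivative f' z) (at z within S)" if "z \<in> S" for z
      using that S by (intro DERIV_subset[OF f_deriv S]) auto
    moreover have "norm (f' z) \<le> \<bar>f' x\<bar> + e" if "z \<in> S" for z
    proof -
      have "dist (f' z) (f' x) < e"
        using that False xa by (intro d(2)) (auto simp: S_def \<delta>_def dist_real_def)
      then show ?thesis by (auto simp: dist_real_def)
    qed
    ultimately have "norm (f a - f x) \<le> (\<bar>f' x\<bar> + e) * norm (a - x)"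
      by (intro field_differentiable_bound[of S]) (auto simp: S_def)
    then show ?thesis by (auto simp: algebra_simps)
  qed
  moreover have "0 < \<delta>" "\<delta> \<le> 1" using d by (auto simp: \<delta>_def)
  ultimately show ?thesis using that by blast
qed

definition majorant :: "real \<Rightarrow> real \<Rightarrow> real \<Rightarrow> real" where
  "majorant r e y = (f y + r * (\<bar>f' y\<bar> + e)) * indicator {0..R + 1} y"

lemma atLeastAtMost_in_sets_nu[measurable]: "{0..b} \<in> sets nu"
  by (simp add: sets_nu_meas_iff)

lemma majorant_measurable[measurable]: "majorant r e \<in> borel_measurable nu"
  unfolding majorant_def by measurable

lemma f_le_majorant: "0 \<le> r \<Longrightarrow> 0 \<le> e \<Longrightarrow> 0 \<le> y \<Longrightarrow> f y \<le> majorant r e y"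
  using f_vanish[of y] f_nonneg[of y] by (cases "y \<le> R + 1") (auto simp: majorant_def)

lemma r_nbhd_superlevel_subset_majorant:
  assumes r: "r \<le> 1" and e: "0 \<le> e" and s: "0 \<le> s"
    and bound: "\<And>x a. 0 \<le> x \<Longrightarrow> 0 \<le> a \<Longrightarrow> \<bar>a - x\<bar> < r \<Longrightarrow> f a \<le> f x + \<bar>a - x\<bar> * (\<bar>f' x\<bar> + e)"
  shows "r_nbhd (superlevel s) r \<subseteq> {y \<in> {0..}. s < majorant r e y}"
proof
  fix x assume x: "x \<in> r_nbhd (superlevel s) r"
  have xR: "x \<in> {0..R + 1}" using r_nbhd_superlevel_subset[OF s r] x by auto
  obtain a where a: "0 \<le> a" "s < f a" "\<bar>x - a\<bar> < r" "0 \<le> x" using x by (auto simp: r_nbhd_def)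
  have "f a \<le> f x + \<bar>a - x\<bar> * (\<bar>f' x\<bar> + e)" using a abs_minus_commute[of x a] by (intro bound) auto
  also have "\<dots> \<le> f x + r * (\<bar>f' x\<bar> + e)"
    using a e by (intro add_left_mono mult_right_mono) (auto simp: abs_minus_commute)
  finally show "x \<in> {y \<in> {0..}. s < majorant r e y}" using a xR by (auto simp: majorant_def)
qed

lemma nn_integral_majorant:
  assumes "0 \<le> r" "0 \<le> e"
  shows "(\<integral>\<^sup>+ y. ennreal (majorant r e y) \<partial>nu) = (\<integral>\<^sup>+ y. ennreal (f y) \<partial>nu)
    + ennreal r * ((\<integral>\<^sup>+ y\<in>{0..R + 1}. ennreal \<bar>f' y\<bar> \<partial>nu) + ennreal e * emeasure nu {0..R + 1})"
proof -
  have "(\<integral>\<^sup>+ y. ennreal (majorant r e y) \<partial>nu) = (\<integral>\<^sup>+ y. ennreal (f y)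
      + ennreal r * (ennreal \<bar>f' y\<bar> * indicator {0..R + 1} y + ennreal e * indicator {0..R + 1} y) \<partial>nu)"
  proof (rule nn_integral_cong)
    fix y assume "y \<in> space nu"
    then show "ennreal (majorant r e y) = ennreal (f y)
        + ennreal r * (ennreal \<bar>f' y\<bar> * indicator {0..R + 1} y + ennreal e * indicator {0..R + 1} y)"
      using assms f_nonneg[of y] f_vanish[of y]
      by (cases "y \<le> R + 1")
        (simp_all add: majorant_def ennreal_plus[symmetric] ennreal_mult[symmetric] distrib_left del: ennreal_plus)
  qed
  then show ?thesis
    by (simp add: nn_integral_add nn_integral_cmult nn_integral_cmult_indicator sets_nu_meas_iff)
qed

definition boundary_quotient :: "real \<Rightarrow> real \<Rightarrow> ennreal" where
  "boundary_quotient r s = (emeasure nu (r_nbhd (superlevel s) r) - emeasure nu (superlevel s)) / ennreal r"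

lemma nn_integral_boundary_quotient_le:
  assumes e: "0 < e" and r: "0 < r" "r \<le> 1"
    and bound: "\<And>x a. 0 \<le> x \<Longrightarrow> 0 \<le> a \<Longrightarrow> \<bar>a - x\<bar> < r \<Longrightarrow> f a \<le> f x + \<bar>a - x\<bar> * (\<bar>f' x\<bar> + e)"
  shows "(\<integral>\<^sup>+ s\<in>{0..}. boundary_quotient r s \<partial>lborel)
       \<le> (\<integral>\<^sup>+ x. ennreal \<bar>f' x\<bar> \<partial>nu) + ennreal e * emeasure nu {0..R + 1}"
proof -
  define g where "g = majorant r e"
  define X where "X = (\<integral>\<^sup>+ y\<in>{0..R + 1}. ennreal \<bar>f' y\<bar> \<partial>nu) + ennreal e * emeasure nu {0..R + 1}"
  have [measurable]: "(\<lambda>s. emeasure nu {y \<in> {0..}. s < g y}) \<in> borel_measurable lborel"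
    "(\<lambda>s. emeasure nu (superlevel s)) \<in> borel_measurable lborel"
    using nu.borel_measurable_emeasure_superlevel[OF majorant_measurable]
      nu.borel_measurable_emeasure_superlevel[OF f_measurable] by (simp_all add: g_def)
  have g_sets: "{y \<in> {0..}. s < g y} \<in> sets nu" for s
  proof -
    have "{y \<in> space nu. s < g y} \<in> sets nu" by (measurable, simp add: g_def)
    then show ?thesis by simp
  qed
  have "(\<integral>\<^sup>+ s\<in>{0..}. boundary_quotient r s \<partial>lborel)
      \<le> (\<integral>\<^sup>+ s. (emeasure nu {y \<in> {0..}. s < g y} - emeasure nu (superlevel s)) * indicator {0..} s
          * ennreal (1 / r) \<partial>lborel)"
  proof (rule nn_integral_mono)
    fix s :: real
    have "emeasure nu (r_nbhd (superlevel s) r) \<le> emeasure nu {y \<in> {0..}. s < g y}" if "0 \<le> s"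
      using r_nbhd_superlevel_subset_majorant[OF r(2) _ that bound] e g_sets unfolding g_def
      by (intro emeasure_mono) auto
    then show "boundary_quotient r s * indicator {0..} s
        \<le> (emeasure nu {y \<in> {0..}. s < g y} - emeasure nu (superlevel s)) * indicator {0..} s * ennreal (1 / r)"
      using r by (cases "0 \<le> s") (simp_all add: boundary_quotient_def ennreal_minus_mono
        divide_ennreal_def inverse_ennreal inverse_eq_divide mult_right_mono)
  qed
  also have "\<dots> = (\<integral>\<^sup>+ s\<in>{0..}. emeasure nu {y \<in> {0..}. s < g y} - emeasure nu (superlevel s) \<partial>lborel)
      * ennreal (1 / r)"
    by (rule nn_integral_multc) measurable
  also have "(\<integral>\<^sup>+ s\<in>{0..}. emeasure nu {y \<in> {0..}. s < g y} - emeasure nu (superlevel s) \<partial>lborel)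
      = ennreal r * X"
    using nu.nn_integral_superlevel_diff[OF f_measurable majorant_measurable, of r e] r e
      f_nonneg f_le_majorant nn_integral_f_finite
    by (simp add: g_def X_def nn_integral_majorant)
  also have "ennreal r * X * ennreal (1 / r) = X"
    using r by (simp add: mult.commute mult.left_commute flip: ennreal_mult)
  also have "X \<le> (\<integral>\<^sup>+ x. ennreal \<bar>f' x\<bar> \<partial>nu) + ennreal e * emeasure nu {0..R + 1}"
    unfolding X_def by (intro add_right_mono nn_integral_mono) (auto simp: indicator_def)
  finally show ?thesis .
qed

lemma nn_integral_boundary_quotient_small:
  assumes e: "0 < e"
  obtains \<delta> where "0 < \<delta>" "\<And>r. 0 < r \<Longrightarrow> r < \<delta> \<Longrightarrow>
    (\<integral>\<^sup>+ s\<in>{0..}. boundary_quotient r s \<partial>lborel) \<le> (\<integral>\<^sup>+ x. ennreal \<bar>f' x\<bar> \<partial>nu) + ennreal e"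
proof -
  define c where "c = enn2real (emeasure nu {0..R + 1})"
  have C: "emeasure nu {0..R + 1} = ennreal c" "0 \<le> c"
    using emeasure_nu_meas_bounded_finite[OF phi_cont, of "{0..R + 1}" "R + 1"]
    by (simp_all add: c_def less_top)
  define e' where "e' = e / (c + 1)"
  have e': "0 < e'" "e' * c \<le> e" using e C(2) by (simp_all add: e'_def field_simps)
  obtain \<delta> where \<delta>: "0 < \<delta>" "\<delta> \<le> 1"
    "\<And>x a. 0 \<le> x \<Longrightarrow> 0 \<le> a \<Longrightarrow> \<bar>a - x\<bar> < \<delta> \<Longrightarrow> f a \<le> f x + \<bar>a - x\<bar> * (\<bar>f' x\<bar> + e')"
    using f_first_order_bound[OF e'(1)] by blast
  have "(\<integral>\<^sup>+ s\<in>{0..}. boundary_quotient r s \<partial>lborel) \<le> (\<integral>\<^sup>+ x. ennreal \<bar>f' x\<bar> \<partial>nu) + ennreal e"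
    if r: "0 < r" "r < \<delta>" for r
  proof -
    have "(\<integral>\<^sup>+ s\<in>{0..}. boundary_quotient r s \<partial>lborel)
        \<le> (\<integral>\<^sup>+ x. ennreal \<bar>f' x\<bar> \<partial>nu) + ennreal e' * ennreal c"
      using r \<delta> unfolding C(1)[symmetric]
      by (intro nn_integral_boundary_quotient_le[OF e'(1)]) (auto intro: \<delta>(3))
    also have "\<dots> \<le> (\<integral>\<^sup>+ x. ennreal \<bar>f' x\<bar> \<partial>nu) + ennreal e"
      using e' C(2) by (intro add_left_mono) (simp add: ennreal_mult[symmetric] ennreal_leI)
    finally show ?thesis .
  qed
  with \<delta>(1) that show ?thesis by blast
qed

lemma borel_measurable_boundary_quotient:
  assumes r: "r \<le> 1"
  shows "(\<lambda>s. boundary_quotient r s * indicator {0..} s) \<in> borel_measurable borel"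
proof -
  \<comment> \<open>for \<open>s < 0\<close> the neighbourhood may have infinite measure, so its measure is frozen at \<open>s = 0\<close> there\<close>
  have "(\<lambda>s. emeasure nu (r_nbhd (superlevel (max s 0)) r)) \<in> borel_measurable borel"
  proof (rule borel_measurable_antimono_ennreal)
    show "emeasure nu (r_nbhd (superlevel (max t 0)) r) \<le> emeasure nu (r_nbhd (superlevel (max s 0)) r)"
      if "s \<le> t" for s t
      using that by (intro emeasure_mono r_nbhd_in_sets) (auto simp: r_nbhd_def)
    show "emeasure nu (r_nbhd (superlevel (max s 0)) r) < \<infinity>" for s
      by (rule emeasure_nu_meas_bounded_finite[OF phi_cont r_nbhd_superlevel_subset]) (use r in auto)
  qed
  moreover have "(\<lambda>s. emeasure nu (superlevel s)) \<in> borel_measurable borel"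
    using nu.borel_measurable_emeasure_superlevel[OF f_measurable] by simp
  ultimately have "(\<lambda>s. (emeasure nu (r_nbhd (superlevel (max s 0)) r) - emeasure nu (superlevel s))
      / ennreal r * indicator {0..} s) \<in> borel_measurable borel"
    by measurable
  moreover have "(emeasure nu (r_nbhd (superlevel (max s 0)) r) - emeasure nu (superlevel s))
      / ennreal r * indicator {0..} s = boundary_quotient r s * indicator {0..} s" for s
    by (cases "0 \<le> s") (auto simp: boundary_quotient_def)
  ultimately show ?thesis by simp
qed

text \<open>The co-area inequality; Fatou's lemma reduces it to the quotients with small \<open>r\<close>.\<close>

lemma nn_integral_boundary_measure_le:
  "(\<integral>\<^sup>+ s\<in>{0..}. nu_plus nu (superlevel s) \<partial>lborel) \<le> (\<integral>\<^sup>+ x. ennreal \<bar>f' x\<bar> \<partial>nu)"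
proof -
  define rr where "rr n = 1 / real (Suc n)" for n
  have rr: "0 < rr n" "rr n \<le> 1" for n by (simp_all add: rr_def)
  have "rr \<longlonglongrightarrow> 0" unfolding rr_def by (rule LIMSEQ_Suc[OF lim_const_over_n])
  then have rr_lim: "filterlim rr (at_right 0) sequentially"
    by (rule tendsto_imp_filterlim_at_right) (simp add: rr)
  have "nu_plus nu (superlevel s) * indicator {0..} s
      \<le> liminf (\<lambda>n. boundary_quotient (rr n) s * indicator {0..} s)" for s
    using Liminf_le_liminf_filterlim[OF rr_lim]
    by (cases "0 \<le> s") (simp_all add: nu_plus_def boundary_quotient_def)
  then have "(\<integral>\<^sup>+ s\<in>{0..}. nu_plus nu (superlevel s) \<partial>lborel)
      \<le> (\<integral>\<^sup>+ s. liminf (\<lambda>n. boundary_quotient (rr n) s * indicator {0..} s) \<partial>lborel)"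
    by (intro nn_integral_mono)
  also have "\<dots> \<le> liminf (\<lambda>n. \<integral>\<^sup>+ s\<in>{0..}. boundary_quotient (rr n) s \<partial>lborel)"
    using borel_measurable_boundary_quotient[OF rr(2)] by (intro nn_integral_liminf) simp
  also have "\<dots> \<le> (\<integral>\<^sup>+ x. ennreal \<bar>f' x\<bar> \<partial>nu)"
  proof (rule ennreal_le_epsilon)
    fix e :: real assume "0 < e"
    then obtain \<delta> where \<delta>: "0 < \<delta>" and small: "\<And>r. 0 < r \<Longrightarrow> r < \<delta> \<Longrightarrow>
      (\<integral>\<^sup>+ s\<in>{0..}. boundary_quotient r s \<partial>lborel) \<le> (\<integral>\<^sup>+ x. ennreal \<bar>f' x\<bar> \<partial>nu) + ennreal e"
      using nn_integral_boundary_quotient_small by blast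
    have "eventually (\<lambda>n. rr n < \<delta>) sequentially"
      using \<open>rr \<longlonglongrightarrow> 0\<close> \<delta> by (rule order_tendstoD)
    then have "eventually (\<lambda>n. (\<integral>\<^sup>+ s\<in>{0..}. boundary_quotient (rr n) s \<partial>lborel)
        \<le> (\<integral>\<^sup>+ x. ennreal \<bar>f' x\<bar> \<partial>nu) + ennreal e) sequentially"
      by eventually_elim (rule small[OF rr(1)])
    then show "liminf (\<lambda>n. \<integral>\<^sup>+ s\<in>{0..}. boundary_quotient (rr n) s \<partial>lborel)
        \<le> (\<integral>\<^sup>+ x. ennreal \<bar>f' x\<bar> \<partial>nu) + ennreal e"
      by (intro Liminf_le) simp_all
  qed
  finally show ?thesis .
qed

definition level_measure :: "real \<Rightarrow> real" where
  "level_measure s = enn2real (emeasure nu (superlevel s))"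

definition mass :: real where
  "mass = integral\<^sup>L nu f"

lemma level_measure_nonneg: "0 \<le> level_measure s"
  by (simp add: level_measure_def)

lemma ennreal_level_measure: "0 \<le> s \<Longrightarrow> ennreal (level_measure s) = emeasure nu (superlevel s)"
  using emeasure_superlevel_finite by (simp add: level_measure_def less_top)

lemma level_measure_measurable[measurable]: "level_measure \<in> borel_measurable borel"
proof -
  have "(\<lambda>s. emeasure nu (superlevel s)) \<in> borel_measurable borel"
    using nu.borel_measurable_emeasure_superlevel[OF f_measurable] by simp
  then show ?thesis unfolding level_measure_def[abs_def] by measurable
qed

lemma ennreal_mass: "ennreal mass = (\<integral>\<^sup>+ y. ennreal (f y) \<partial>nu)"
proof -
  have "mass = enn2real (\<integral>\<^sup>+ y. ennreal (f y) \<partial>nu)"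
    unfolding mass_def by (intro integral_eq_nn_integral f_measurable AE_I2) (simp add: f_nonneg)
  with nn_integral_f_finite show ?thesis by (simp add: less_top)
qed

lemma mass_nonneg: "0 \<le> mass"
  unfolding mass_def by (intro integral_nonneg_AE AE_I2) (simp add: f_nonneg)

lemma mass_layer_cake: "ennreal mass = (\<integral>\<^sup>+ s\<in>{0..}. ennreal (level_measure s) \<partial>lborel)"
proof -
  have "ennreal mass = (\<integral>\<^sup>+ s\<in>{0..}. emeasure nu (superlevel s) \<partial>lborel)"
    using nu.nn_integral_layer_cake[OF f_measurable] f_nonneg by (simp add: ennreal_mass)
  also have "\<dots> = (\<integral>\<^sup>+ s\<in>{0..}. ennreal (level_measure s) \<partial>lborel)"
    by (intro nn_integral_cong) (simp add: ennreal_level_measure indicator_def)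
  finally show ?thesis .
qed

lemma nn_integral_level_L_le:
  assumes L: "concave_on {0..} L" and L_nonneg: "\<And>x. 0 \<le> x \<Longrightarrow> 0 \<le> L x"
    and mass: "0 < mass" and v: "0 < v"
  shows "(\<integral>\<^sup>+ s\<in>{0..<v}. ennreal (level_measure s * L (mass / level_measure s) / mass) \<partial>lborel)
    \<le> ennreal (L v)"
proof -
  obtain d where d: "0 \<le> d" "\<And>y. 0 \<le> y \<Longrightarrow> L y \<le> L v + d * (y - v)"
    using mono_concave_on_supporting_line[OF L concave_on_nonneg_imp_mono_on[OF L L_nonneg] v] by blast
  define c where "c = (L v - d * v) / mass"
  have "0 \<le> L v - d * v" using d(2)[of 0] L_nonneg[of 0] by simp
  then have c: "0 \<le> c" using mass by (simp add: c_def)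
  have "(\<integral>\<^sup>+ s\<in>{0..<v}. ennreal (level_measure s * L (mass / level_measure s) / mass) \<partial>lborel)
      \<le> (\<integral>\<^sup>+ s. ennreal c * (ennreal (level_measure s) * indicator {0..<v} s) + ennreal d * indicator {0..<v} s \<partial>lborel)"
  proof (rule nn_integral_mono)
    fix s
    have "ennreal (level_measure s * L (mass / level_measure s) / mass) \<le> ennreal (c * level_measure s + d)"
      using perspective_le_supporting_line[OF mass level_measure_nonneg d] by (simp add: c_def ennreal_leI)
    also have "\<dots> = ennreal c * ennreal (level_measure s) + ennreal d"
      using c d level_measure_nonneg[of s] by (simp add: ennreal_mult ennreal_plus)
    finally show "ennreal (level_measure s * L (mass / level_measure s) / mass) * indicator {0..<v} s
        \<le> ennreal c * (ennreal (level_measure s) * indicator {0..<v} s) + ennreal d * indicator {0..<v} s"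
      by (auto simp: indicator_def)
  qed
  also have "\<dots> = ennreal c * (\<integral>\<^sup>+ s\<in>{0..<v}. ennreal (level_measure s) \<partial>lborel) + ennreal d * ennreal v"
    using v by (simp add: nn_integral_add nn_integral_cmult)
  also have "\<dots> \<le> ennreal c * ennreal mass + ennreal d * ennreal v"
    unfolding mass_layer_cake
    by (intro add_right_mono mult_left_mono nn_integral_mono) (auto simp: indicator_def)
  also have "\<dots> = ennreal (L v)"
    using mass c d v \<open>0 \<le> L v - d * v\<close>
    by (simp add: c_def ennreal_mult[symmetric] ennreal_plus[symmetric] del: ennreal_plus)
  finally show ?thesis .
qed

lemma nn_integral_weighted_L_le:
  assumes L: "concave_on {0..} L" and L_nonneg: "\<And>x. 0 \<le> x \<Longrightarrow> 0 \<le> L x" and mass: "0 < mass"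
  shows "(\<integral>\<^sup>+ s\<in>{0..}. ennreal (level_measure s / mass * (level_measure s * L (mass / level_measure s))) \<partial>lborel)
    \<le> (\<integral>\<^sup>+ y. ennreal (L (f y)) \<partial>nu)"
proof -
  define q where "q s = level_measure s * L (mass / level_measure s) / mass" for s
  have q_nonneg: "0 \<le> q s" for s
    using level_measure_nonneg[of s] mass L_nonneg by (simp add: q_def)
  have "(\<lambda>s. L (mass / level_measure s)) \<in> borel_measurable borel"
    using mass level_measure_nonneg by (intro measurable_concave_on_comp[OF L]) auto
  then have "(\<lambda>s. ennreal (q s)) \<in> borel_measurable borel" unfolding q_def by measurable
  have "(\<integral>\<^sup>+ s\<in>{0..}. ennreal (level_measure s / mass * (level_measure s * L (mass / level_measure s))) \<partial>lborel)
      = (\<integral>\<^sup>+ s\<in>{0..}. ennreal (q s) * emeasure nu (superlevel s) \<partial>lborel)"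
    using q_nonneg level_measure_nonneg
    by (intro nn_integral_cong)
      (auto simp: indicator_def q_def ennreal_level_measure[symmetric, simplified] field_simps simp flip: ennreal_mult)
  also have "\<dots> = (\<integral>\<^sup>+ y. (\<integral>\<^sup>+ s\<in>{0..<f y}. ennreal (q s) \<partial>lborel) \<partial>nu)"
    using nu.nn_integral_weighted_layer_cake[OF f_measurable \<open>(\<lambda>s. ennreal (q s)) \<in> _\<close>] by simp
  also have "\<dots> \<le> (\<integral>\<^sup>+ y. ennreal (L (f y)) \<partial>nu)"
  proof (rule nn_integral_mono)
    fix y assume "y \<in> space nu"
    then show "(\<integral>\<^sup>+ s\<in>{0..<f y}. ennreal (q s) \<partial>lborel) \<le> ennreal (L (f y))"
      using nn_integral_level_L_le[OF L L_nonneg mass, of "f y"] f_nonneg[of y]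
      by (cases "f y = 0") (simp_all add: q_def)
  qed
  finally show ?thesis .
qed

lemma le_nn_integral_abs_f'_plus:
  assumes mass: "0 < mass" and A: "0 \<le> A" and [measurable]: "\<beta> \<in> borel_measurable borel"
    and le: "\<And>s. 0 \<le> s \<Longrightarrow> 0 < level_measure s \<Longrightarrow>
      ennreal (level_measure s / mass * A) \<le> nu_plus nu (superlevel s) + ennreal (\<beta> s)"
  shows "ennreal A \<le> (\<integral>\<^sup>+ y. ennreal \<bar>f' y\<bar> \<partial>nu) + (\<integral>\<^sup>+ s\<in>{0..}. ennreal (\<beta> s) \<partial>lborel)"
proof -
  define \<phi> where "\<phi> s = ennreal (level_measure s / mass * A) - ennreal (\<beta> s)" for s
  have [measurable]: "\<phi> \<in> borel_measurable borel" unfolding \<phi>_def[abs_def] by measurable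
  have \<phi>_le: "\<phi> s \<le> nu_plus nu (superlevel s)" if s: "0 \<le> s" for s
  proof (cases "0 < level_measure s")
    case True
    then show ?thesis using le[OF s True] unfolding \<phi>_def
      by (subst ennreal_minus_le_iff) (auto simp: add.commute)
  qed (use level_measure_nonneg[of s] in \<open>simp add: \<phi>_def\<close>)
  have "ennreal A = ennreal (A / mass) * ennreal mass"
    using mass A by (simp flip: ennreal_mult)
  also have "\<dots> = (\<integral>\<^sup>+ s\<in>{0..}. ennreal (A / mass) * ennreal (level_measure s) \<partial>lborel)"
    unfolding mass_layer_cake by (simp add: nn_integral_cmult[symmetric] mult.assoc)
  also have "\<dots> \<le> (\<integral>\<^sup>+ s. \<phi> s * indicator {0..} s + ennreal (\<beta> s) * indicator {0..} s \<partial>lborel)"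
  proof (rule nn_integral_mono)
    fix s
    have "ennreal (A / mass) * ennreal (level_measure s) = ennreal (level_measure s / mass * A)"
      using mass A level_measure_nonneg[of s] by (simp flip: ennreal_mult)
    also have "\<dots> \<le> \<phi> s + ennreal (\<beta> s)"
      using ennreal_minus_le_iff[of "ennreal (level_measure s / mass * A)" "ennreal (\<beta> s)"
          "ennreal (level_measure s / mass * A) - ennreal (\<beta> s)"]
      by (simp add: \<phi>_def add.commute)
    finally show "ennreal (A / mass) * ennreal (level_measure s) * indicator {0..} s
        \<le> \<phi> s * indicator {0..} s + ennreal (\<beta> s) * indicator {0..} s"
      by (auto simp: indicator_def)
  qed
  also have "\<dots> = (\<integral>\<^sup>+ s\<in>{0..}. \<phi> s \<partial>lborel) + (\<integral>\<^sup>+ s\<in>{0..}. ennreal (\<beta> s) \<partial>lborel)"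
    by (rule nn_integral_add) measurable
  also have "\<dots> \<le> (\<integral>\<^sup>+ y. ennreal \<bar>f' y\<bar> \<partial>nu) + (\<integral>\<^sup>+ s\<in>{0..}. ennreal (\<beta> s) \<partial>lborel)"
    using \<phi>_le
    by (intro add_right_mono order_trans[OF _ nn_integral_boundary_measure_le] nn_integral_mono)
      (auto simp: indicator_def)
  finally show ?thesis .
qed

lemma J_level_measure_le_nu_plus:
  assumes "lower_isoperimetric nu J" "0 \<le> s"
  shows "ennreal (J (level_measure s)) \<le> nu_plus nu (superlevel s)"
  using assms superlevel_in_sets[of s] emeasure_superlevel_finite[of s]
  unfolding lower_isoperimetric_def level_measure_def sets_nu_meas_iff by blast

lemma nn_integral_weight_eq_1:
  assumes "0 < mass"
  shows "(\<integral>\<^sup>+ s\<in>{0..}. ennreal (level_measure s / mass) \<partial>lborel) = 1"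
proof -
  have "ennreal (level_measure s / mass) = ennreal (1 / mass) * ennreal (level_measure s)" for s
    using assms level_measure_nonneg[of s] by (simp flip: ennreal_mult)
  then have "(\<integral>\<^sup>+ s\<in>{0..}. ennreal (level_measure s / mass) \<partial>lborel)
      = ennreal (1 / mass) * (\<integral>\<^sup>+ s\<in>{0..}. ennreal (level_measure s) \<partial>lborel)"
    by (simp add: nn_integral_cmult[symmetric] mult.assoc)
  also have "\<dots> = 1" using assms by (simp flip: mass_layer_cake ennreal_mult)
  finally show ?thesis .
qed

context
  fixes I J K L :: "real \<Rightarrow> real"
  assumes I_nonneg: "\<And>x. 0 \<le> x \<Longrightarrow> 0 \<le> I x"
    and J_nonneg: "\<And>x. 0 \<le> x \<Longrightarrow> 0 \<le> J x"
    and K_nonneg: "\<And>x. 0 \<le> x \<Longrightarrow> 0 \<le> K x"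
    and L_nonneg: "\<And>x. 0 \<le> x \<Longrightarrow> 0 \<le> L x"
    and IJKL: "\<And>a b. 0 \<le> a \<Longrightarrow> 0 \<le> b \<Longrightarrow> I (a * b) \<le> b * J a + K (a * L b)"
    and J_isoperimetric: "lower_isoperimetric nu J"
    and K_mono: "mono_on {0..} K" and K_concave: "concave_on {0..} K"
    and L_concave: "concave_on {0..} L"
begin

private abbreviation G :: "real \<Rightarrow> real"
  where "G s \<equiv> level_measure s * L (mass / level_measure s)"

private lemma G_nonneg: "0 \<le> G s"
  by (intro mult_nonneg_nonneg L_nonneg divide_nonneg_nonneg mass_nonneg level_measure_nonneg)

private lemma G_measurable: "G \<in> borel_measurable borel"
proof -
  have "(\<lambda>s. L (mass / level_measure s)) \<in> borel_measurable borel"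
    using mass_nonneg level_measure_nonneg by (intro measurable_concave_on_comp[OF L_concave]) auto
  then show ?thesis by measurable
qed

private lemma KG_measurable: "(\<lambda>s. K (G s)) \<in> borel_measurable borel"
  by (rule measurable_concave_on_comp[OF K_concave G_measurable G_nonneg])

lemma I_mass_le:
  assumes mass: "0 < mass"
  shows "ennreal (I mass) \<le> (\<integral>\<^sup>+ y. ennreal \<bar>f' y\<bar> \<partial>nu)
    + (\<integral>\<^sup>+ s\<in>{0..}. ennreal (level_measure s / mass * K (G s)) \<partial>lborel)"
proof (rule le_nn_integral_abs_f'_plus[OF mass I_nonneg[OF mass_nonneg]])
  show "(\<lambda>s. level_measure s / mass * K (G s)) \<in> borel_measurable borel"
    using KG_measurable by measurable
next
  fix s :: real assume s: "0 \<le> s" and u: "0 < level_measure s"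
  have "I mass \<le> mass / level_measure s * J (level_measure s) + K (G s)"
    using IJKL[of "level_measure s" "mass / level_measure s"] u mass by simp
  then have "level_measure s / mass * I mass \<le> J (level_measure s) + level_measure s / mass * K (G s)"
    using u mass by (simp add: field_simps)
  then have "ennreal (level_measure s / mass * I mass)
      \<le> ennreal (J (level_measure s)) + ennreal (level_measure s / mass * K (G s))"
    using u mass J_nonneg[of "level_measure s"] K_nonneg[of "G s"] L_nonneg[of "mass / level_measure s"]
    by (simp flip: ennreal_plus)
  also have "\<dots> \<le> nu_plus nu (superlevel s) + ennreal (level_measure s / mass * K (G s))"
    using J_level_measure_le_nu_plus[OF J_isoperimetric s] by (rule add_right_mono)
  finally show "ennreal (level_measure s / mass * I mass)
      \<le> nu_plus nu (superlevel s) + ennreal (level_measure s / mass * K (G s))" .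
qed

lemma weighted_K_le_K_ext:
  assumes mass: "0 < mass"
  shows "enn2ereal (\<integral>\<^sup>+ s\<in>{0..}. ennreal (level_measure s / mass * K (G s)) \<partial>lborel)
    \<le> K_ext K (\<integral>\<^sup>+ y. ennreal (L (f y)) \<partial>nu)"
proof -
  have restrict: "(\<integral>\<^sup>+ s. g s \<partial>restrict_space lborel {0..}) = (\<integral>\<^sup>+ s\<in>{0..}. g s \<partial>lborel)"
    for g :: "real \<Rightarrow> ennreal"
    by (rule nn_integral_restrict_space) simp
  have "enn2ereal (\<integral>\<^sup>+ s. ennreal (level_measure s / mass * K (G s)) \<partial>restrict_space lborel {0..})
      \<le> K_ext K (\<integral>\<^sup>+ y. ennreal (L (f y)) \<partial>nu)"
  proof (rule nn_integral_concave_le_K_ext[OF K_mono K_concave K_nonneg])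
    show "(\<lambda>s. level_measure s / mass) \<in> borel_measurable (restrict_space lborel {0..})"
      "G \<in> borel_measurable (restrict_space lborel {0..})"
      using G_measurable by (auto intro: measurable_restrict_space1)
    show "(\<integral>\<^sup>+ s. ennreal (level_measure s / mass) \<partial>restrict_space lborel {0..}) = 1"
      using nn_integral_weight_eq_1[OF mass] by (simp add: restrict)
    show "(\<integral>\<^sup>+ s. ennreal (level_measure s / mass * G s) \<partial>restrict_space lborel {0..})
        \<le> (\<integral>\<^sup>+ y. ennreal (L (f y)) \<partial>nu)"
      using nn_integral_weighted_L_le[OF L_concave L_nonneg mass] by (simp add: restrict)
  qed (use mass level_measure_nonneg G_nonneg in auto)
  then show ?thesis by (simp add: restrict)
qed

lemma I_mass_le_K_ext:
  "ereal (I mass) \<le> K_ext K (\<integral>\<^sup>+ y. ennreal (L (f y)) \<partial>nu) + ereal (integral\<^sup>L nu (\<lambda>y. \<bar>f' y\<bar>))"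
proof (cases "mass = 0")
  case True
  have "ereal (I mass) \<le> ereal (K 0)" using IJKL[of 0 0] True by simp
  also have "\<dots> \<le> K_ext K (\<integral>\<^sup>+ y. ennreal (L (f y)) \<partial>nu)" by (rule K_ext_ge_K[OF K_mono]) auto
  finally show ?thesis by (simp add: add_increasing2 integral_nonneg)
next
  case False
  then have mass: "0 < mass" using mass_nonneg by simp
  have "(\<integral>\<^sup>+ y. ennreal \<bar>f' y\<bar> \<partial>nu) = ennreal (integral\<^sup>L nu (\<lambda>y. \<bar>f' y\<bar>))"
    using nn_integral_abs_f'_finite by (simp add: integral_eq_nn_integral less_top)
  moreover have "0 \<le> integral\<^sup>L nu (\<lambda>y. \<bar>f' y\<bar>)" by (simp add: integral_nonneg)
  ultimately have "ereal (I mass) \<le> ereal (integral\<^sup>L nu (\<lambda>y. \<bar>f' y\<bar>))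
      + enn2ereal (\<integral>\<^sup>+ s\<in>{0..}. ennreal (level_measure s / mass * K (G s)) \<partial>lborel)"
    using I_mass_le[OF mass] I_nonneg[OF mass_nonneg]
    by (simp add: less_eq_ennreal.rep_eq plus_ennreal.rep_eq)
  also have "\<dots> \<le> ereal (integral\<^sup>L nu (\<lambda>y. \<bar>f' y\<bar>)) + K_ext K (\<integral>\<^sup>+ y. ennreal (L (f y)) \<partial>nu)"
    using weighted_K_le_K_ext[OF mass] by (rule add_left_mono)
  finally show ?thesis by (simp add: add.commute)
qed

end

end

theorem theorem2p1:
  fixes phi I J K L f f' :: "real \<Rightarrow> real"
  assumes phi_nonneg: "\<forall>x\<ge>0. phi x \<ge> 0"
    and phi_cont: "continuous_on {0..} phi"
    and I_nonneg: "\<forall>x\<ge>0. I x \<ge> 0"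
    and J_nonneg: "\<forall>x\<ge>0. J x \<ge> 0"
    and K_nonneg: "\<forall>x\<ge>0. K x \<ge> 0"
    and L_nonneg: "\<forall>x\<ge>0. L x \<ge> 0"
    and cond_i: "\<forall>a\<ge>0. \<forall>b\<ge>0. I (a * b) \<le> b * J a + K (a * L b)"
    and cond_ii: "lower_isoperimetric (nu_meas phi) J"
    and cond_iii: "mono_on {0..} K" "concave_on {0..} K"
    and cond_iv: "concave_on {0..} L"
    and f_nonneg: "\<forall>x\<ge>0. f x \<ge> 0"
    and f_deriv: "\<forall>x\<ge>0. (f has_real_derivative f' x) (at x within {0..})"
    and f'_cont: "continuous_on {0..} f'"
    and f_bdd_supp: "\<exists>R. \<forall>x\<ge>R. f x = 0"
  shows "ereal (I (integral\<^sup>L (nu_meas phi) f))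
           \<le> K_ext K (\<integral>\<^sup>+ x. ennreal (L (f x)) \<partial>(nu_meas phi))
              + ereal (integral\<^sup>L (nu_meas phi) (\<lambda>x. \<bar>f' x\<bar>))"
proof -
  obtain R where R: "\<forall>x\<ge>R. f x = 0" using f_bdd_supp by blast
  interpret bounded_support_C1 phi f f' "max R 1"
    using phi_cont f_nonneg f_deriv f'_cont R by unfold_locales auto
  show ?thesis
    unfolding mass_def[symmetric]
    by (rule I_mass_le_K_ext) (use I_nonneg J_nonneg K_nonneg L_nonneg cond_i cond_ii cond_iii cond_iv in auto)
qed

end
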